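(* Consider the local time-stepping Adams–Bashforth scheme of order $k$ described in the context, applied to $\frac{d\mathbf{y}}{dt}=\mathbf{D}(\mathbf{y})$. Let $\mathbf{c}\in\mathbb{R}^N$ satisfy $\mathbf{c}\cdot\mathbf{D}(\mathbf{y})=0$ for all $\mathbf{y}\in\mathbb{R}^N$ (a linear conserved quantity $C=\mathbf{c}\cdot\mathbf{y}$). Then $\mathbf{c}\cdot\Delta\tilde{\mathbf{y}}_n=0$ for every step index $n$. Consequently, writing $\mathbf{c}=(\mathbf{c}^1,\ldots,\mathbf{c}^S)$ according to the partition of the components, if $n_1<n_2$ are indices such that $\tilde t_{n_1}$ and $\tilde t_{n_2}$ are evaluation times of every set, i.e. $\tilde t_{n_1}=t^s_{p_s}$ and $\tilde t_{n_2}=t^s_{r_s}$ for all $s$, then $\sum_{s=1}^S \mathbf{c}^s\cdot\mathbf{y}^s_{r_s}=\sum_{s=1}^S\mathbf{c}^s\cdot\mathbf{y}^s_{p_s}$ exactly.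
   Context: We solve an autonomous system $\frac{d\mathbf{y}}{dt}=\mathbf{D}(\mathbf{y})$, $\mathbf{y}\in\mathbb{R}^N$, $\mathbf{D}:\mathbb{R}^N\to\mathbb{R}^N$. The components of $\mathbf{y}$ are partitioned into $S$ sets, $\mathbf{y}=(\mathbf{y}^1,\ldots,\mathbf{y}^S)$, and $\mathbf{D}^s$ denotes the components of $\mathbf{D}$ belonging to set $s$. Set $s$ is evaluated at strictly increasing times $t^s_0<t^s_1<\cdots$, and $\mathbf{y}^s_q$ denotes the numerical value of $\mathbf{y}^s$ at time $t^s_q$. Let $\tilde t_0<\tilde t_1<\cdots$ be the increasing enumeration of the union of all evaluation times of all sets, $\Delta\tilde t_n=\tilde t_{n+1}-\tilde t_n$. For each $s$ and $n$ let $m^s(n)$ be the index with $t^s_{m^s(n)}\le\tilde t_n<t^s_{m^s(n)+1}$, and for each $s,m$ let $n^s(m)$ be defined by $\tilde t_{n^s(m)}=t^s_m$. Lagrange polynomials: $\ell_j(t;\tau_0,\ldots,\tau_{k-1})=\prod_{i\ne j}\frac{t-\tau_i}{\tau_j-\tau_i}$. Adams–Bashforth coefficients for the merged sequence: $\tilde\alpha_{ni}=\frac{1}{\Delta\tilde t_n}\int_{\tilde t_n}^{\tilde t_{n+1}}\ell_i(t;\tilde t_n,\tilde t_{n-1},\ldots,\tilde t_{n-(k-1)})\,dt$. The scheme defines, for each $n$ (large enough that all indices below exist), $\Delta\tilde{\mathbf{y}}_n=\sum_{q^1=m^1(n)-(k-1)}^{m^1(n)}\cdots\sum_{q^S=m^S(n)-(k-1)}^{m^S(n)}\beta_{n;q^1\cdots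 q^S}\,\mathbf{D}(\mathbf{y}^1_{q^1},\ldots,\mathbf{y}^S_{q^S})$, with $\beta_{n;q^1\cdots q^S}=\Delta\tilde t_n\sum_{i=0}^{k-1}\tilde\alpha_{ni}\prod_{s=1}^S\ell_{m^s(n)-q^s}\big(\tilde t_{n-i};t^s_{m^s(n)},\ldots,t^s_{m^s(n)-(k-1)}\big)$, and the update of set $s$ from $t^s_m$ to $t^s_{m+1}$ is $\mathbf{y}^s_{m+1}=\mathbf{y}^s_m+\sum_{n=n^s(m)}^{n^s(m+1)-1}(\Delta\tilde{\mathbf{y}}_n)^s$, where $(\cdot)^s$ denotes the components belonging to set $s$. *)

theory Defs
  imports "HOL-Analysis.Analysis"
begin

definition lagr :: "nat \<Rightarrow> (nat \<Rightarrow> real) \<Rightarrow> nat \<Rightarrow> real \<Rightarrow> real" where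
  "lagr k tau j x = (\<Prod>i\<in>{..<k} - {j}. (x - tau i) / (tau j - tau i))"

definition msn :: "('s \<Rightarrow> nat \<Rightarrow> real) \<Rightarrow> (nat \<Rightarrow> real) \<Rightarrow> 's \<Rightarrow> nat \<Rightarrow> nat" where
  "msn t tt s n = (THE m. t s m \<le> tt n \<and> tt n < t s (Suc m))"

definition nsm :: "('s \<Rightarrow> nat \<Rightarrow> real) \<Rightarrow> (nat \<Rightarrow> real) \<Rightarrow> 's \<Rightarrow> nat \<Rightarrow> nat" where
  "nsm t tt s m = (THE n. tt n = t s m)"

definition ab_alpha :: "nat \<Rightarrow> (nat \<Rightarrow> real) \<Rightarrow> nat \<Rightarrow> nat \<Rightarrow> real" where
  "ab_alpha k tt n i =
     (1 / (tt (Suc n) - tt n)) * integral {tt n..tt (Suc n)} (\<lambda>x. lagr k (\<lambda>j. tt (n - j)) i x)"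

text \<open>beta_{n;q^1...q^S}; q :: 's \<Rightarrow> nat gives the index q^s for each set s.\<close>
definition lts_beta :: "nat \<Rightarrow> ('s::finite \<Rightarrow> nat \<Rightarrow> real) \<Rightarrow> (nat \<Rightarrow> real) \<Rightarrow> nat \<Rightarrow> ('s \<Rightarrow> nat) \<Rightarrow> real" where
  "lts_beta k t tt n q =
     (tt (Suc n) - tt n) *
       (\<Sum>i<k. ab_alpha k tt n i *
          (\<Prod>s\<in>UNIV. lagr k (\<lambda>j. t s (msn t tt s n - j)) (msn t tt s n - q s) (tt (n - i))))"

text \<open>Delta ytilde_n. Components are indexed by the finite type 'i, blk i is the set
  containing component i, Y s q is the numerical value y^s_q (only components i with
  blk i = s are meaningful).\<close>
definition lts_delta ::
  "nat \<Rightarrow> (('i::finite \<Rightarrow> real) \<Rightarrow> ('i \<Rightarrow> real)) \<Rightarrow> ('i \<Rightarrow> 's::finite) \<Rightarrow>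
   ('s \<Rightarrow> nat \<Rightarrow> real) \<Rightarrow> (nat \<Rightarrow> real) \<Rightarrow> ('s \<Rightarrow> nat \<Rightarrow> 'i \<Rightarrow> real) \<Rightarrow> nat \<Rightarrow> 'i \<Rightarrow> real" where
  "lts_delta k D blk t tt Y n =
     (\<lambda>j. \<Sum>q\<in>PiE UNIV (\<lambda>s. {msn t tt s n - (k - 1) .. msn t tt s n}).
        lts_beta k t tt n q * D (\<lambda>i. Y (blk i) (q (blk i)) i) j)"

end

theory Submission
  imports Defs
begin

text \<open>Every increment of the scheme is a linear combination of values of \<open>D\<close>, so it is
  annihilated by any \<open>c\<close> orthogonal to the range of \<open>D\<close>; summing the increments of all sets
  between two common evaluation times then shows that \<open>c \<bullet> y\<close> is conserved exactly.\<close>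

lemma conserved_linear_combination:
  fixes D :: "'y \<Rightarrow> 'i::finite \<Rightarrow> real"
  assumes "\<And>y. (\<Sum>i\<in>UNIV. c i * D y i) = 0"
  shows "(\<Sum>i\<in>UNIV. c i * (\<Sum>q\<in>Q. b q * D (y q) i)) = 0"
proof -
  have "(\<Sum>i\<in>UNIV. c i * (\<Sum>q\<in>Q. b q * D (y q) i))
      = (\<Sum>q\<in>Q. b q * (\<Sum>i\<in>UNIV. c i * D (y q) i))"
    by (simp add: sum_distrib_left sum.swap[of _ Q] algebra_simps)
  also have "\<dots> = 0" using assms by simp
  finally show ?thesis .
qed

lemma conserved_lts_delta:
  assumes "\<And>y. (\<Sum>i\<in>UNIV. c i * D y i) = 0"
  shows "(\<Sum>i\<in>UNIV. c i * lts_delta k D blk t tt Y n i) = 0"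
  unfolding lts_delta_def
  by (rule conserved_linear_combination[OF assms, where y = "\<lambda>q i. Y (blk i) (q (blk i)) i"])

lemma nsm_eqI:
  assumes "inj tt" and "tt n = t s m"
  shows "nsm t tt s m = n"
  unfolding nsm_def
proof (rule the_equality)
  fix x
  assume "tt x = t s m"
  then show "x = n" using assms by (metis injD)
qed (fact assms)

lemma tt_nsm:
  assumes "inj tt" and "t s m \<in> range tt"
  shows "tt (nsm t tt s m) = t s m"
proof -
  obtain n where n: "t s m = tt n" using assms(2) by (rule rangeE)
  have "nsm t tt s m = n" using assms(1) n[symmetric] by (rule nsm_eqI)
  then show ?thesis using n by simp
qed

lemma mono_nsm:
  assumes "strict_mono tt" and "mono (t s)" and "range (t s) \<subseteq> range tt"
  shows "mono (nsm t tt s)"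
proof
  fix m m' :: nat
  assume "m \<le> m'"
  have "inj tt" using assms(1) by (rule strict_mono_imp_inj_on)
  with assms(3) have tt_nsm': "tt (nsm t tt s j) = t s j" for j
    by (blast intro: tt_nsm)
  have "tt (nsm t tt s m) \<le> tt (nsm t tt s m')"
    using \<open>m \<le> m'\<close> \<open>mono (t s)\<close> by (simp add: tt_nsm' monoD)
  then show "nsm t tt s m \<le> nsm t tt s m'"
    using \<open>strict_mono tt\<close> by (simp add: strict_mono_less_eq)
qed

lemma telescope_blocks:
  fixes y :: "nat \<Rightarrow> 'a::comm_monoid_add" and N :: "nat \<Rightarrow> nat"
  assumes "mono N" and "p \<le> r"
    and step: "\<And>m. p \<le> m \<Longrightarrow> m < r \<Longrightarrow> y (Suc m) = y m + (\<Sum>n\<in>{N m..<N (Suc m)}. f n)"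
  shows "y r = y p + (\<Sum>n\<in>{N p..<N r}. f n)"
  using \<open>p \<le> r\<close>
proof (induction r rule: dec_induct)
  case base
  then show ?case by simp
next
  case (step m)
  have "N p \<le> N m" "N m \<le> N (Suc m)"
    using \<open>mono N\<close> \<open>p \<le> m\<close> by (simp_all add: monoD)
  then show ?case
    using step.IH step.hyps assms(3)[of m]
    by (simp add: add.assoc sum.atLeastLessThan_concat)
qed

lemma telescope_nsm:
  fixes y :: "nat \<Rightarrow> 'a::comm_monoid_add"
  assumes tt: "strict_mono tt" and ts: "strict_mono (t s)" and "range (t s) \<subseteq> range tt"
    and n1: "tt n1 = t s p" and n2: "tt n2 = t s r" and "n1 \<le> n2"
    and step: "\<And>m. p \<le> m \<Longrightarrow> m < r \<Longrightarrow>
      y (Suc m) = y m + (\<Sum>n\<in>{nsm t tt s m..<nsm t tt s (Suc m)}. f n)"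
  shows "y r = y p + (\<Sum>n\<in>{n1..<n2}. f n)"
proof -
  have "inj tt" using tt by (rule strict_mono_imp_inj_on)
  have nsm_p: "nsm t tt s p = n1" using \<open>inj tt\<close> n1 by (rule nsm_eqI)
  have nsm_r: "nsm t tt s r = n2" using \<open>inj tt\<close> n2 by (rule nsm_eqI)
  have "t s p \<le> t s r" using \<open>n1 \<le> n2\<close> tt n1 n2 by (metis strict_mono_less_eq)
  then have "p \<le> r" using ts by (simp add: strict_mono_less_eq)
  have "mono (nsm t tt s)" using tt strict_mono_mono[OF ts] assms(3) by (rule mono_nsm)
  from telescope_blocks[OF this \<open>p \<le> r\<close> step] show ?thesis by (simp add: nsm_p nsm_r)
qed

lemma sum_partition_blocks:
  fixes blk :: "'i::finite \<Rightarrow> 's::finite"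
  shows "(\<Sum>s\<in>UNIV. \<Sum>i\<in>{i. blk i = s}. g s i) = (\<Sum>i\<in>UNIV. g (blk i) i)"
  using sum.group[of UNIV UNIV blk "\<lambda>i. g (blk i) i"] by simp

theorem mainTheorem1:
  fixes k :: nat
    and D :: "('i::finite \<Rightarrow> real) \<Rightarrow> ('i \<Rightarrow> real)"
    and blk :: "'i \<Rightarrow> 's::finite"
    and t :: "'s \<Rightarrow> nat \<Rightarrow> real"
    and tt :: "nat \<Rightarrow> real"
    and Y :: "'s \<Rightarrow> nat \<Rightarrow> 'i \<Rightarrow> real"
    and c :: "'i \<Rightarrow> real"
    and n1 n2 :: nat
    and p r :: "'s \<Rightarrow> nat"
  assumes k: "k \<ge> 1"
    and t_mono: "\<And>s. strict_mono (t s)"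
    and tt_mono: "strict_mono tt"
    and tt_range: "range tt = (\<Union>s. range (t s))"
    and cons: "\<And>y. (\<Sum>i\<in>UNIV. c i * D y i) = 0"
    and update: "\<And>s m i. p s \<le> m \<Longrightarrow> m < r s \<Longrightarrow> blk i = s \<Longrightarrow>
        Y s (Suc m) i = Y s m i +
          (\<Sum>n\<in>{nsm t tt s m ..< nsm t tt s (Suc m)}. lts_delta k D blk t tt Y n i)"
    and n12: "n1 < n2"
    and p_def: "\<And>s. tt n1 = t s (p s)"
    and r_def: "\<And>s. tt n2 = t s (r s)"
  shows "(\<forall>n. (\<Sum>i\<in>UNIV. c i * lts_delta k D blk t tt Y n i) = 0) \<and>
         (\<Sum>s\<in>UNIV. \<Sum>i\<in>{i. blk i = s}. c i * Y s (r s) i) =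
         (\<Sum>s\<in>UNIV. \<Sum>i\<in>{i. blk i = s}. c i * Y s (p s) i)"
proof -
  let ?d = "lts_delta k D blk t tt Y"
  have Y_r: "Y (blk i) (r (blk i)) i = Y (blk i) (p (blk i)) i + (\<Sum>n\<in>{n1..<n2}. ?d n i)" for i
  proof (rule telescope_nsm[OF tt_mono t_mono _ p_def r_def less_imp_le[OF n12]])
    show "range (t (blk i)) \<subseteq> range tt" using tt_range by auto
  qed (simp add: update)
  have "(\<Sum>s\<in>UNIV. \<Sum>i\<in>{i. blk i = s}. c i * Y s (r s) i) = (\<Sum>i\<in>UNIV. c i * Y (blk i) (r (blk i)) i)"
    by (rule sum_partition_blocks)
  also have "\<dots> = (\<Sum>i\<in>UNIV. c i * Y (blk i) (p (blk i)) i)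
      + (\<Sum>i\<in>UNIV. \<Sum>n\<in>{n1..<n2}. c i * ?d n i)"
    by (simp add: Y_r distrib_left sum.distrib sum_distrib_left)
  also have "\<dots> = (\<Sum>i\<in>UNIV. c i * Y (blk i) (p (blk i)) i)
      + (\<Sum>n\<in>{n1..<n2}. \<Sum>i\<in>UNIV. c i * ?d n i)"
    by (subst sum.swap) (rule refl)
  also have "\<dots> = (\<Sum>i\<in>UNIV. c i * Y (blk i) (p (blk i)) i)"
    by (simp add: conserved_lts_delta[OF cons])
  also have "\<dots> = (\<Sum>s\<in>UNIV. \<Sum>i\<in>{i. blk i = s}. c i * Y s (p s) i)"
    by (rule sum_partition_blocks[symmetric])
  finally show ?thesis by (simp add: conserved_lts_delta[OF cons])
qed

end
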